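(* There cannot be two finalized checkpoints on different (conflicting) chains. That is, if checkpoints $C$ and $C'$ are both finalized, then the block of one is an ancestor of (or equal to) the block of the other.
   Context: System: $n$ validators, each with equal stake, of which $f<n/3$ are Byzantine; the validator set is fixed between finalized checkpoints. Blocks form a tree rooted at the genesis block, and a chain is a path from the genesis block. A checkpoint is a pair $(b,e)$, where $b$ is the block of the first slot of epoch $e$ on the chain. A checkpoint vote is a signed pair, source $(a,e_a)$ and target $(b,e_b)$, with $e_a<e_b$. A supermajority link $(a,e_a)\to(b,e_b)$ exists when more than $2/3$ of the validators cast that checkpoint vote. A checkpoint is justified if it is the target of a supermajority link; the genesis checkpoint is justified. A checkpoint $(a,e_a)$ is finalized if: - it is justified; - there is a supermajority link $(a,e_a)\to(b,e_b)$ with $e_b-e_a\le 2$; - if $e_b-e_a=2$, the checkpoint at epoch $e_a+1$ on that chain is justified. Honest validators follow these rules: - each casts at most one checkpoint vote per epoch; - the source is the justified checkpoint with the highest epoch in its view; - the target is the current epoch's checkpoint on the candidate chain, selected by a fork choice rule that only follows chains extending the block of that highest justified checkpoint. *)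

theory Defs
  imports Main
begin

text \<open>The block tree is given by a parent function
  (with parent genesis = genesis) and a slot function; slots strictly decrease
  towards the genesis block, so every block has a unique path (chain) to genesis.
  S is the number of slots per epoch; epoch e starts at slot e * S.\<close>

type_synonym 'b checkpoint = "'b \<times> nat"
type_synonym ('v, 'b) vote = "'v \<times> 'b checkpoint \<times> 'b checkpoint"
  (* (validator, source, target) *)

definition block_tree :: "('b \<Rightarrow> 'b) \<Rightarrow> ('b \<Rightarrow> nat) \<Rightarrow> 'b \<Rightarrow> bool" where
  "block_tree parent slot genesis \<longleftrightarrow>
     parent genesis = genesis \<and> slot genesis = 0 \<and>
     (\<forall>b. b \<noteq> genesis \<longrightarrow> slot (parent b) < slot b)"

definition ancestor :: "('b \<Rightarrow> 'b) \<Rightarrow> 'b \<Rightarrow> 'b \<Rightarrow> bool" where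
  "ancestor parent a b \<longleftrightarrow> (\<exists>k. (parent ^^ k) b = a)"

text \<open>The block of the first slot of epoch e on the chain ending in h:
  the latest block of that chain whose slot is at most e * S.\<close>
definition epoch_boundary :: "('b \<Rightarrow> 'b) \<Rightarrow> ('b \<Rightarrow> nat) \<Rightarrow> nat \<Rightarrow> 'b \<Rightarrow> nat \<Rightarrow> 'b" where
  "epoch_boundary parent slot S h e =
     (THE x. ancestor parent x h \<and> slot x \<le> e * S \<and>
        (\<forall>y. ancestor parent y h \<and> slot y \<le> e * S \<longrightarrow> slot y \<le> slot x))"

definition sm_link :: "'v set \<Rightarrow> ('v, 'b) vote set \<Rightarrow> 'b checkpoint \<Rightarrow> 'b checkpoint \<Rightarrow> bool" where
  "sm_link Vals W s t \<longleftrightarrow> 3 * card {v \<in> Vals. (v, s, t) \<in> W} > 2 * card Vals"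

definition justified :: "'b \<Rightarrow> 'v set \<Rightarrow> ('v, 'b) vote set \<Rightarrow> 'b checkpoint \<Rightarrow> bool" where
  "justified genesis Vals W c \<longleftrightarrow> c = (genesis, 0) \<or> (\<exists>s. sm_link Vals W s c)"

definition finalized :: "('b \<Rightarrow> 'b) \<Rightarrow> ('b \<Rightarrow> nat) \<Rightarrow> nat \<Rightarrow> 'b \<Rightarrow> 'v set
    \<Rightarrow> ('v, 'b) vote set \<Rightarrow> 'b checkpoint \<Rightarrow> bool" where
  "finalized parent slot S genesis Vals W c \<longleftrightarrow>
     justified genesis Vals W c \<and>
     (\<exists>b eb. sm_link Vals W c (b, eb) \<and> snd c < eb \<and> eb \<le> snd c + 2 \<and>
        (eb = snd c + 2 \<longrightarrow>
           justified genesis Vals W (epoch_boundary parent slot S b (snd c + 1), snd c + 1)))"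

text \<open>Honest behaviour of validator v. view v e is the set of votes v has seen
  when voting in epoch e (a subset of all cast votes W, growing over time).
  The vote cast in epoch e has target epoch e.\<close>
definition honest :: "('b \<Rightarrow> 'b) \<Rightarrow> ('b \<Rightarrow> nat) \<Rightarrow> nat \<Rightarrow> 'b \<Rightarrow> 'v set
    \<Rightarrow> ('v, 'b) vote set \<Rightarrow> ('v \<Rightarrow> nat \<Rightarrow> ('v, 'b) vote set) \<Rightarrow> 'v \<Rightarrow> bool" where
  "honest parent slot S genesis Vals W view v \<longleftrightarrow>
     (\<forall>e. view v e \<subseteq> W) \<and>
     (\<forall>e e'. e \<le> e' \<longrightarrow> view v e \<subseteq> view v e') \<and>
     (\<forall>s t s' t'. (v, s, t) \<in> W \<longrightarrow> (v, s', t') \<in> W \<longrightarrow> snd t = snd t'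
         \<longrightarrow> s = s' \<and> t = t') \<and>
     (\<forall>s t. (v, s, t) \<in> W \<longrightarrow>
         justified genesis Vals (view v (snd t)) s \<and>
         (\<forall>c. justified genesis Vals (view v (snd t)) c \<longrightarrow> snd c \<le> snd s) \<and>
         (\<exists>h. ancestor parent (fst s) h \<and>
              t = (epoch_boundary parent slot S h (snd t), snd t)))"

end

theory Submission
  imports Defs
begin

text \<open>Fix a finalized checkpoint (a, ea) with finalizing link (a, ea) \<rightarrow> (b, eb). By strong induction
  on the epoch, every justified checkpoint (x, ex) with ea \<le> ex has a as an ancestor of x. Such a
  checkpoint is the target of a supermajority link from a justified source s whose block is an
  ancestor of x. If snd s \<ge> ea the induction hypothesis applies to s. Otherwise the link
  s \<rightarrow> (x, ex) crosses epoch ea; since two supermajorities share an honest validator, who neither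
  votes twice in an epoch nor casts a vote surrounding another of its votes, either x = b or
  (eb = ea + 2 and x is the justified checkpoint of epoch ea + 1 on the chain of b); both descend
  from a. Applied to the finalized checkpoint of smaller epoch, this gives the theorem.\<close>

lemma ancestor_refl: "ancestor p a a"
  unfolding ancestor_def by (rule exI[of _ 0]) simp

lemma ancestor_parent: "ancestor p (p b) b"
  unfolding ancestor_def by (rule exI[of _ 1]) simp

lemma ancestor_trans:
  assumes "ancestor p a b" "ancestor p b c"
  shows "ancestor p a c"
proof -
  obtain j k where "(p ^^ j) b = a" "(p ^^ k) c = b"
    using assms unfolding ancestor_def by blast
  then have "(p ^^ (j + k)) c = a"
    by (simp add: funpow_add)
  then show ?thesis
    unfolding ancestor_def by blast
qed

lemma ancestors_linear:
  assumes "ancestor p x h" "ancestor p y h"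
  shows "ancestor p x y \<or> ancestor p y x"
proof -
  obtain k k' where k: "(p ^^ k) h = x" "(p ^^ k') h = y"
    using assms unfolding ancestor_def by blast
  have "(p ^^ (k' - k)) x = y" if "k \<le> k'"
    using k that by (metis funpow_add le_add_diff_inverse2 o_apply)
  moreover have "(p ^^ (k - k')) y = x" if "k' \<le> k"
    using k that by (metis funpow_add le_add_diff_inverse2 o_apply)
  ultimately show ?thesis
    unfolding ancestor_def by (meson nat_le_linear)
qed

lemma block_tree_funpow_genesis: "block_tree p slot g \<Longrightarrow> (p ^^ n) g = g"
  unfolding block_tree_def by (induction n) auto

lemma block_tree_slot_parent_le: "block_tree p slot g \<Longrightarrow> slot (p x) \<le> slot x"
  unfolding block_tree_def by (cases "x = g") (auto intro: less_imp_le)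

lemma block_tree_ancestor_slot_le:
  assumes "block_tree p slot g" "ancestor p a b"
  shows "slot a \<le> slot b"
proof -
  have "slot ((p ^^ k) b) \<le> slot b" for k
    by (induction k) (auto intro: order_trans block_tree_slot_parent_le[OF assms(1)])
  then show ?thesis
    using assms(2) unfolding ancestor_def by blast
qed

lemma block_tree_ancestor_slot_eq:
  assumes bt: "block_tree p slot g" and anc: "ancestor p x y" and "slot x = slot y"
  shows "x = y"
proof (rule ccontr)
  assume "x \<noteq> y"
  moreover obtain k where k: "(p ^^ k) y = x"
    using anc unfolding ancestor_def by blast
  ultimately obtain j where "k = Suc j"
    by (cases k) auto
  then have j: "(p ^^ j) (p y) = x"
    using k by (simp only: funpow_Suc_right o_apply)
  have "y \<noteq> g"
    using \<open>x \<noteq> y\<close> k block_tree_funpow_genesis[OF bt] by auto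
  then have "slot (p y) < slot y"
    using bt unfolding block_tree_def by simp
  moreover have "slot x \<le> slot (p y)"
    using j block_tree_ancestor_slot_le[OF bt] unfolding ancestor_def by blast
  ultimately show False
    using \<open>slot x = slot y\<close> by simp
qed

lemma block_tree_genesis_ancestor:
  assumes bt: "block_tree p slot g"
  shows "ancestor p g h"
proof (induction "slot h" arbitrary: h rule: less_induct)
  case less
  show ?case
  proof (cases "h = g")
    case False
    then have "slot (p h) < slot h"
      using bt unfolding block_tree_def by simp
    then have "ancestor p g (p h)"
      using less by blast
    then show ?thesis
      using ancestor_trans ancestor_parent by metis
  qed (simp add: ancestor_refl)
qed

lemma block_tree_latest_ancestor_unique:
  assumes bt: "block_tree p slot g"
  shows "\<exists>!x. ancestor p x h \<and> slot x \<le> n \<and>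
           (\<forall>y. ancestor p y h \<and> slot y \<le> n \<longrightarrow> slot y \<le> slot x)"
proof -
  define k0 where "k0 = (LEAST k. slot ((p ^^ k) h) \<le> n)"
  define x0 where "x0 = (p ^^ k0) h"
  obtain kg where "(p ^^ kg) h = g"
    using block_tree_genesis_ancestor[OF bt] unfolding ancestor_def by blast
  moreover have "slot g = 0"
    using bt unfolding block_tree_def by simp
  ultimately have x0_le: "slot x0 \<le> n"
    unfolding x0_def k0_def by (metis LeastI zero_le)
  have latest: "slot y \<le> slot x0" if y: "ancestor p y h" "slot y \<le> n" for y
  proof -
    obtain k where k: "(p ^^ k) h = y"
      using y(1) unfolding ancestor_def by blast
    then have "k0 \<le> k"
      unfolding k0_def using y(2) k by (intro Least_le) simp
    then have "(p ^^ (k - k0)) x0 = y"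
      using k unfolding x0_def by (metis funpow_add le_add_diff_inverse2 o_apply)
    then show ?thesis
      using block_tree_ancestor_slot_le[OF bt] unfolding ancestor_def by blast
  qed
  have x0_anc: "ancestor p x0 h"
    unfolding x0_def ancestor_def by blast
  have unique: "x = x0" if x: "ancestor p x h" "slot x \<le> n"
    "\<forall>y. ancestor p y h \<and> slot y \<le> n \<longrightarrow> slot y \<le> slot x" for x
  proof -
    have "slot x = slot x0"
      using x latest x0_anc x0_le by (meson le_antisym)
    moreover have "ancestor p x x0 \<or> ancestor p x0 x"
      using ancestors_linear[OF x(1) x0_anc] .
    ultimately show ?thesis
      using block_tree_ancestor_slot_eq[OF bt] by metis
  qed
  show ?thesis
    using x0_anc x0_le latest unique by (intro ex1I[of _ x0]) blast+
qed

lemma epoch_boundary: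
  assumes bt: "block_tree p slot g"
  shows epoch_boundary_ancestor: "ancestor p (epoch_boundary p slot S h e) h"
    and epoch_boundary_slot_le: "slot (epoch_boundary p slot S h e) \<le> e * S"
    and epoch_boundary_latest: "\<And>y. ancestor p y h \<Longrightarrow> slot y \<le> e * S
           \<Longrightarrow> slot y \<le> slot (epoch_boundary p slot S h e)"
  using theI'[OF block_tree_latest_ancestor_unique[OF bt, of h "e * S"]]
  unfolding epoch_boundary_def by blast+

lemma ancestor_epoch_boundary:
  assumes bt: "block_tree p slot g" and a: "ancestor p a h" "slot a \<le> e * S"
  shows "ancestor p a (epoch_boundary p slot S h e)"
  using ancestors_linear[OF a(1) epoch_boundary_ancestor[OF bt]]
proof
  let ?x = "epoch_boundary p slot S h e"
  assume x_a: "ancestor p ?x a"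
  have "slot ?x = slot a"
    using block_tree_ancestor_slot_le[OF bt x_a] epoch_boundary_latest[OF bt a] by simp
  then show ?thesis
    using block_tree_ancestor_slot_eq[OF bt x_a] ancestor_refl by metis
qed

lemma sm_link_mono:
  assumes "finite Vals" "W' \<subseteq> W" "sm_link Vals W' s t"
  shows "sm_link Vals W s t"
proof -
  have "card {v \<in> Vals. (v, s, t) \<in> W'} \<le> card {v \<in> Vals. (v, s, t) \<in> W}"
    using assms(1,2) by (intro card_mono) auto
  then show ?thesis
    using assms(3) unfolding sm_link_def by linarith
qed

lemma justified_mono:
  "finite Vals \<Longrightarrow> W' \<subseteq> W \<Longrightarrow> justified g Vals W' c \<Longrightarrow> justified g Vals W c"
  unfolding justified_def using sm_link_mono by blast

lemma sm_links_common_honest_voter: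
  assumes fin: "finite Vals" and FV: "F \<subseteq> Vals" and small: "3 * card F < card Vals"
    and "sm_link Vals W s t" "sm_link Vals W s' t'"
  shows "\<exists>v \<in> Vals - F. (v, s, t) \<in> W \<and> (v, s', t') \<in> W"
proof (rule ccontr)
  assume none: "\<not> ?thesis"
  let ?A = "{v \<in> Vals. (v, s, t) \<in> W}" and ?B = "{v \<in> Vals. (v, s', t') \<in> W}"
  have fin_AB: "finite ?A" "finite ?B"
    using fin by auto
  have "finite F"
    using fin FV by (rule finite_subset[rotated])
  then have "card (?A \<inter> ?B) \<le> card F"
    using none by (intro card_mono) auto
  moreover have "card (?A \<union> ?B) \<le> card Vals"
    using fin by (intro card_mono) auto
  moreover have "card ?A + card ?B = card (?A \<union> ?B) + card (?A \<inter> ?B)"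
    using card_Un_Int[OF fin_AB] .
  ultimately show False
    using assms(4,5) small unfolding sm_link_def by linarith
qed

lemma honestD:
  assumes "honest parent slot S genesis Vals W view v"
  shows honest_view_subset: "view v e \<subseteq> W"
    and honest_view_mono: "e \<le> e' \<Longrightarrow> view v e \<subseteq> view v e'"
    and honest_single_vote: "(v, s, t) \<in> W \<Longrightarrow> (v, s', t') \<in> W \<Longrightarrow> snd t = snd t' \<Longrightarrow> t = t'"
    and honest_source_justified: "(v, s, t) \<in> W \<Longrightarrow> justified genesis Vals (view v (snd t)) s"
    and honest_source_latest: "(v, s, t) \<in> W \<Longrightarrow> justified genesis Vals (view v (snd t)) c
           \<Longrightarrow> snd c \<le> snd s"
    and honest_target: "(v, s, t) \<in> W \<Longrightarrow>
           \<exists>h. ancestor parent (fst s) h \<and> t = (epoch_boundary parent slot S h (snd t), snd t)"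
proof -
  note h = assms[unfolded honest_def]
  show "view v e \<subseteq> W"
    using h by (elim conjE) blast
  show "e \<le> e' \<Longrightarrow> view v e \<subseteq> view v e'"
    using h by (elim conjE) blast
  show "(v, s, t) \<in> W \<Longrightarrow> (v, s', t') \<in> W \<Longrightarrow> snd t = snd t' \<Longrightarrow> t = t'"
    using h by (elim conjE) blast
  show "(v, s, t) \<in> W \<Longrightarrow> justified genesis Vals (view v (snd t)) s"
    using h by (elim conjE) blast
  show "(v, s, t) \<in> W \<Longrightarrow> justified genesis Vals (view v (snd t)) c \<Longrightarrow> snd c \<le> snd s"
    using h by (elim conjE) blast
  show "(v, s, t) \<in> W \<Longrightarrow>
           \<exists>h. ancestor parent (fst s) h \<and> t = (epoch_boundary parent slot S h (snd t), snd t)"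
    using h by (elim conjE) blast
qed

locale casper_ffg =
  fixes parent :: "'b \<Rightarrow> 'b" and slot :: "'b \<Rightarrow> nat" and genesis :: 'b and S :: nat
    and Vals F :: "'v set" and W :: "('v, 'b) vote set"
    and view :: "'v \<Rightarrow> nat \<Rightarrow> ('v, 'b) vote set"
  assumes bt: "block_tree parent slot genesis"
    and fin: "finite Vals"
    and faulty_subset: "F \<subseteq> Vals"
    and few_faulty: "3 * card F < card Vals"
    and votes_increase_epoch: "\<forall>(v, s, t) \<in> W. snd s < snd t"
    and honest: "\<forall>v \<in> Vals - F. honest parent slot S genesis Vals W view v"
begin

abbreviation J where "J \<equiv> justified genesis Vals W"

lemma sm_links_common_voter:
  "sm_link Vals W s t \<Longrightarrow> sm_link Vals W s' t'
    \<Longrightarrow> \<exists>v \<in> Vals - F. (v, s, t) \<in> W \<and> (v, s', t') \<in> W"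
  using sm_links_common_honest_voter[OF fin faulty_subset few_faulty] .

lemma sm_link_honest_voter: "sm_link Vals W s t \<Longrightarrow> \<exists>v \<in> Vals - F. (v, s, t) \<in> W"
  using sm_links_common_voter by blast

lemma sm_link_target_epoch_pos:
  assumes "sm_link Vals W s t"
  shows "0 < snd t"
proof -
  obtain v where "(v, s, t) \<in> W"
    using sm_link_honest_voter[OF assms] by blast
  then show ?thesis
    using votes_increase_epoch by fastforce
qed

lemma honest_validator: "v \<in> Vals - F \<Longrightarrow> honest parent slot S genesis Vals W view v"
  using honest by blast

lemma honest_vote_source_justified:
  assumes "v \<in> Vals - F" "(v, s, t) \<in> W"
  shows "J s"
proof -
  note hv = honest_validator[OF assms(1)]
  show ?thesis
    using justified_mono[OF fin honest_view_subset[OF hv] honest_source_justified[OF hv assms(2)]] .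
qed

lemma honest_no_surround:
  assumes "v \<in> Vals - F" "(v, s1, t1) \<in> W" "(v, s2, t2) \<in> W" "snd t2 \<le> snd t1"
  shows "snd s2 \<le> snd s1"
proof -
  note hv = honest_validator[OF assms(1)]
  have "justified genesis Vals (view v (snd t1)) s2"
    using justified_mono[OF fin honest_view_mono[OF hv assms(4)] honest_source_justified[OF hv assms(3)]] .
  then show ?thesis
    by (rule honest_source_latest[OF hv assms(2)])
qed

lemma justified_slot_le:
  assumes "J (x, e)"
  shows "slot x \<le> e * S"
proof (cases "(x, e) = (genesis, 0)")
  case True
  then show ?thesis
    using bt unfolding block_tree_def by simp
next
  case False
  then obtain s where "sm_link Vals W s (x, e)"
    using assms unfolding justified_def by blast
  then obtain v where "v \<in> Vals - F" "(v, s, (x, e)) \<in> W"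
    using sm_link_honest_voter by blast
  then obtain h where "x = epoch_boundary parent slot S h e"
    using honest_target[OF honest_validator] by fastforce
  then show ?thesis
    using epoch_boundary_slot_le[OF bt] by simp
qed

lemma justified_epoch_unique:
  assumes "J (x, e)" "J (y, e)"
  shows "x = y"
proof (cases "e = 0")
  case True
  then show ?thesis
    using assms sm_link_target_epoch_pos unfolding justified_def by fastforce
next
  case False
  then obtain s s' where "sm_link Vals W s (x, e)" "sm_link Vals W s' (y, e)"
    using assms unfolding justified_def by auto
  then obtain v where "v \<in> Vals - F" "(v, s, (x, e)) \<in> W" "(v, s', (y, e)) \<in> W"
    using sm_links_common_voter by blast
  then show ?thesis
    using honest_single_vote[OF honest_validator] by fastforce
qed

lemma finalizedE:
  assumes "finalized parent slot S genesis Vals W (a, ea)"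
  obtains b eb where "J (a, ea)" "sm_link Vals W (a, ea) (b, eb)" "ea < eb" "eb \<le> ea + 2"
    "eb = ea + 2 \<Longrightarrow> J (epoch_boundary parent slot S b (ea + 1), ea + 1)"
  using assms unfolding finalized_def by auto

lemma finalized_ancestor_of_crossing_link:
  assumes fa: "finalized parent slot S genesis Vals W (a, ea)"
    and link: "sm_link Vals W s (x, ex)" and Jx: "J (x, ex)"
    and crossing: "snd s < ea" "ea < ex"
  shows "ancestor parent a x"
proof -
  obtain b eb where Ja: "J (a, ea)" and fl: "sm_link Vals W (a, ea) (b, eb)" "ea < eb" "eb \<le> ea + 2"
    "eb = ea + 2 \<Longrightarrow> J (epoch_boundary parent slot S b (ea + 1), ea + 1)"
    by (rule finalizedE[OF fa]) (rule that)
  obtain v where v: "v \<in> Vals - F" "(v, s, (x, ex)) \<in> W" "(v, (a, ea), (b, eb)) \<in> W"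
    using sm_links_common_voter[OF link fl(1)] by blast
  note hv = honest_validator[OF v(1)]
  have sa: "slot a \<le> ea * S"
    using justified_slot_le[OF Ja] .
  obtain h where "ancestor parent a h" "b = epoch_boundary parent slot S h eb"
    using honest_target[OF hv v(3)] by auto
  moreover have "slot a \<le> eb * S"
    using sa fl(2) by (meson le_trans less_imp_le mult_le_mono1)
  ultimately have ab: "ancestor parent a b"
    using ancestor_epoch_boundary[OF bt] by simp
  have "ex \<le> eb"
    using honest_no_surround[OF v(1,2,3)] crossing(1) by force
  then consider "ex = eb" | "ex = ea + 1" "eb = ea + 2"
    using crossing(2) fl(3) by linarith
  then show ?thesis
  proof cases
    case 1
    then show ?thesis
      using honest_single_vote[OF hv v(2,3)] ab by simp
  next
    case 2
    then have "x = epoch_boundary parent slot S b (ea + 1)"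
      using justified_epoch_unique Jx fl(4) by metis
    moreover have "slot a \<le> (ea + 1) * S"
      using sa by (meson le_trans mult_le_mono1 le_add1)
    ultimately show ?thesis
      using ancestor_epoch_boundary[OF bt ab] by simp
  qed
qed

lemma finalized_ancestor_of_justified:
  assumes fa: "finalized parent slot S genesis Vals W (a, ea)"
  shows "J (x, ex) \<Longrightarrow> ea \<le> ex \<Longrightarrow> ancestor parent a x"
proof (induction ex arbitrary: x rule: less_induct)
  case (less ex)
  have Ja: "J (a, ea)"
    using fa unfolding finalized_def by (rule conjunct1)
  show ?case
  proof (cases "ex = ea")
    case True
    then have "a = x"
      using justified_epoch_unique[OF Ja] less.prems(1) by simp
    then show ?thesis
      by (simp add: ancestor_refl)
  next
    case False
    then obtain s where link: "sm_link Vals W s (x, ex)"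
      using less.prems unfolding justified_def by auto
    then obtain v where v: "v \<in> Vals - F" "(v, s, (x, ex)) \<in> W"
      using sm_link_honest_voter by blast
    have Js: "J (fst s, snd s)"
      using honest_vote_source_justified[OF v] by simp
    have ss: "snd s < ex"
      using v(2) votes_increase_epoch by fastforce
    obtain h where "ancestor parent (fst s) h" "x = epoch_boundary parent slot S h ex"
      using honest_target[OF honest_validator[OF v(1)] v(2)] by auto
    moreover have "slot (fst s) \<le> ex * S"
      using justified_slot_le[OF Js] ss by (simp add: order_trans)
    ultimately have sx: "ancestor parent (fst s) x"
      using ancestor_epoch_boundary[OF bt] by simp
    show ?thesis
    proof (cases "ea \<le> snd s")
      case True
      then have "ancestor parent a (fst s)"
        by (rule less.IH[OF ss Js])
      then show ?thesis
        by (rule ancestor_trans[OF _ sx])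
    next
      case False
      then show ?thesis
        using finalized_ancestor_of_crossing_link[OF fa link less.prems(1)] \<open>ex \<noteq> ea\<close> less.prems(2)
        by simp
    qed
  qed
qed

end

theorem mainTheorem4:
  fixes parent :: "'b \<Rightarrow> 'b" and slot :: "'b \<Rightarrow> nat" and genesis :: 'b and S :: nat
    and Vals F :: "'v set" and W :: "('v, 'b) vote set"
    and view :: "'v \<Rightarrow> nat \<Rightarrow> ('v, 'b) vote set"
    and C C' :: "'b checkpoint"
  assumes "block_tree parent slot genesis"
    and "S > 0"
    and "finite Vals"
    and "F \<subseteq> Vals"
    and "3 * card F < card Vals"
    and "\<forall>(v, s, t) \<in> W. snd s < snd t"
    and "\<forall>v \<in> Vals - F. honest parent slot S genesis Vals W view v"
    and "finalized parent slot S genesis Vals W C"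
    and "finalized parent slot S genesis Vals W C'"
  shows "ancestor parent (fst C) (fst C') \<or> ancestor parent (fst C') (fst C)"
proof -
  interpret casper_ffg parent slot genesis S Vals F W view
    using assms by unfold_locales auto
  obtain a ea a' ea' where C: "C = (a, ea)" and C': "C' = (a', ea')"
    by (cases C, cases C')
  have final: "finalized parent slot S genesis Vals W (a, ea)"
    and final': "finalized parent slot S genesis Vals W (a', ea')"
    using assms(8,9) C C' by simp_all
  have "J (a, ea)" "J (a', ea')"
    using finalizedE[OF final] finalizedE[OF final'] by blast+
  then consider "ancestor parent a a'" | "ancestor parent a' a"
    using finalized_ancestor_of_justified[OF final] finalized_ancestor_of_justified[OF final']
      nat_le_linear by blast
  then show ?thesis
    using C C' by cases simp_all
qed

end
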